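(* Let $q$ be a conjunctive query and $q'$ a subquery of $q$ (a subset of its atoms); for a database $i$ for $q$, let $i'$ be its restriction to the relations of $q'$. Let $B$ be any map that assigns to each matching database $i'$ a set $B(i')\subseteq q'(i')$, and assume $\mathbf E[|B(I')|]\le\gamma\,\mathbf E[|q'(I')|]$. Then $\mathbf E[|q(I)\ltimes B(I')|]\le\gamma\,\mathbf E[|q(I)|]$, where $I$ is a uniformly chosen matching database and $I'$ its restriction.
   Context: Conjunctive queries are full and self-join-free; $q(i)$ is the set of assignments to the variables of $q$ satisfying all atoms on database $i$. Matching database over $[n]$: each relation has exactly $n$ tuples and each column contains each value of $[n]$ exactly once; uniformly chosen means each relation independently uniform among such. For $A\subseteq q(i)$ and $B\subseteq q'(i')$ with $\mathrm{atoms}(q')\subseteq\mathrm{atoms}(q)$, the semijoin $A\ltimes B$ is the set of tuples of $A$ whose projection onto the variables of $q'$ lies in $B$. *)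

theory Defs
  imports "HOL-Probability.Probability"
begin

text \<open>A conjunctive query is a finite set of atoms; an atom is a pair of a relation
  name and the list of variables in its columns. Full: every variable is an output variable,
  so answers are assignments to all variables.\<close>

type_synonym ('r, 'v) cq = "('r \<times> 'v list) set"
type_synonym 'r db = "'r \<Rightarrow> nat list set"

definition self_join_free :: "('r, 'v) cq \<Rightarrow> bool" where
  "self_join_free q \<longleftrightarrow> (\<forall>a\<in>q. \<forall>b\<in>q. fst a = fst b \<longrightarrow> a = b)"

definition cq_vars :: "('r, 'v) cq \<Rightarrow> 'v set" where
  "cq_vars q = (\<Union>(R, xs)\<in>q. set xs)"

definition cq_rels :: "('r, 'v) cq \<Rightarrow> 'r set" where
  "cq_rels q = fst ` q"

definition answers :: "('r, 'v) cq \<Rightarrow> 'r db \<Rightarrow> ('v \<Rightarrow> nat) set" where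
  "answers q D = {\<alpha> \<in> cq_vars q \<rightarrow>\<^sub>E UNIV. \<forall>(R, xs)\<in>q. map \<alpha> xs \<in> D R}"

definition matching_rel :: "nat \<Rightarrow> nat \<Rightarrow> nat list set \<Rightarrow> bool" where
  "matching_rel n k T \<longleftrightarrow>
     (\<forall>t\<in>T. length t = k \<and> set t \<subseteq> {1..n}) \<and> finite T \<and> card T = n \<and>
     (\<forall>j<k. \<forall>v\<in>{1..n}. \<exists>!t. t \<in> T \<and> t ! j = v)"

definition matching_dbs :: "nat \<Rightarrow> ('r, 'v) cq \<Rightarrow> 'r db set" where
  "matching_dbs n q = {D. (\<forall>(R, xs)\<in>q. matching_rel n (length xs) (D R)) \<and>
                          (\<forall>R. R \<notin> cq_rels q \<longrightarrow> D R = {})}"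

definition restrict_db :: "'r db \<Rightarrow> ('r, 'v) cq \<Rightarrow> 'r db" where
  "restrict_db D q' = (\<lambda>R. if R \<in> cq_rels q' then D R else {})"

definition semijoin :: "('v \<Rightarrow> nat) set \<Rightarrow> 'v set \<Rightarrow> ('v \<Rightarrow> nat) set \<Rightarrow> ('v \<Rightarrow> nat) set" where
  "semijoin A V B = {\<alpha> \<in> A. restrict \<alpha> V \<in> B}"

end

theory Submission
  imports Defs
begin

text \<open>Restricting a matching database \<open>I\<close> for \<open>q\<close> to \<open>q'\<close> and to \<open>q - q'\<close> is, for a
  self-join-free query, a bijection onto pairs \<open>(I', I'')\<close> of matching databases. A tuple of
  \<open>q(I) \<ltimes> B(I')\<close> is a partial answer \<open>\<alpha> \<in> B(I')\<close> together with an extension of \<open>\<alpha>\<close> that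
  satisfies the atoms of \<open>q - q'\<close> in \<open>I''\<close>. Transposing the values \<open>\<alpha> x\<close> and \<open>\<beta> x\<close> in every
  column holding \<open>x\<close> permutes the matching databases for \<open>q - q'\<close> and carries extensions of \<open>\<alpha>\<close>
  to extensions of \<open>\<beta>\<close>, so the number \<open>K\<close> of extensions of \<open>\<alpha>\<close>, summed over all \<open>I''\<close>, does
  not depend on \<open>\<alpha>\<close>. Hence \<open>E |q(I) \<ltimes> B(I')| = (K / N) E |B(I')|\<close>, with \<open>N\<close> the number of
  matching databases for \<open>q - q'\<close>; for \<open>B = q'\<close> this gives \<open>E |q(I)| = (K / N) E |q'(I')|\<close>.\<close>

section \<open>Matching relations and databases\<close>

definition map_cols :: "(nat \<Rightarrow> 'a \<Rightarrow> 'a) \<Rightarrow> 'a list \<Rightarrow> 'a list" where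
  "map_cols h t = map (\<lambda>j. h j (t ! j)) [0..<length t]"

lemma length_map_cols [simp]: "length (map_cols h t) = length t"
  by (simp add: map_cols_def)

lemma nth_map_cols [simp]: "j < length t \<Longrightarrow> map_cols h t ! j = h j (t ! j)"
  by (simp add: map_cols_def)

lemma map_cols_involutive:
  assumes "\<And>j v. h j (h j v) = v"
  shows "map_cols h (map_cols h t) = t"
  by (rule nth_equalityI) (simp_all add: assms)

lemma map_cols_map: "map_cols (\<lambda>j. f (xs ! j)) (map g xs) = map (\<lambda>x. f x (g x)) xs"
  by (rule nth_equalityI) simp_all

lemma matching_rel_tuple: "matching_rel n k T \<Longrightarrow> t \<in> T \<Longrightarrow> length t = k \<and> set t \<subseteq> {1..n}"
  by (auto simp: matching_rel_def)

lemma matching_rel_map_cols: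
  assumes T: "matching_rel n k T" and inv: "\<And>j v. h j (h j v) = v"
    and range: "\<And>j v. j < k \<Longrightarrow> v \<in> {1..n} \<Longrightarrow> h j v \<in> {1..n}"
  shows "matching_rel n k (map_cols h ` T)"
proof -
  have inj: "inj_on (map_cols h) T"
    by (metis inj_onI map_cols_involutive inv)
  have tuples: "length t = k \<and> set t \<subseteq> {1..n}" if t: "t \<in> map_cols h ` T" for t
  proof -
    obtain u where u: "u \<in> T" "t = map_cols h u" using t by auto
    have "length u = k" "set u \<subseteq> {1..n}" using matching_rel_tuple[OF T u(1)] by auto
    then show ?thesis using u range by (fastforce simp: in_set_conv_nth)
  qed
  have columns: "\<exists>!t. t \<in> map_cols h ` T \<and> t ! j = v" if j: "j < k" and v: "v \<in> {1..n}" for j v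
  proof -
    obtain u where u: "u \<in> T" "u ! j = h j v"
      and unique: "\<And>u'. u' \<in> T \<Longrightarrow> u' ! j = h j v \<Longrightarrow> u' = u"
      using T j range[OF j v] unfolding matching_rel_def by metis
    show ?thesis
    proof (rule ex1I[of _ "map_cols h u"])
      show "map_cols h u \<in> map_cols h ` T \<and> map_cols h u ! j = v"
        using u j inv matching_rel_tuple[OF T u(1)] by simp
    next
      fix t assume t: "t \<in> map_cols h ` T \<and> t ! j = v"
      then obtain u' where u': "u' \<in> T" "t = map_cols h u'" by auto
      then have "h j (u' ! j) = v" using t j matching_rel_tuple[OF T u'(1)] by simp
      then have "u' ! j = h j v" using inv by metis
      then show "t = map_cols h u" using unique u' by simp
    qed
  qed
  show ?thesis using tuples columns T card_image[OF inj] by (auto simp: matching_rel_def)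
qed

lemma in_cq_vars: "x \<in> cq_vars q \<longleftrightarrow> (\<exists>R xs. (R, xs) \<in> q \<and> x \<in> set xs)"
  by (auto simp: cq_vars_def)

lemma cq_vars_mono: "q' \<subseteq> q \<Longrightarrow> cq_vars q' \<subseteq> cq_vars q"
  by (auto simp: cq_vars_def)

lemma finite_cq_vars: "finite q \<Longrightarrow> finite (cq_vars q)"
  by (auto simp: cq_vars_def)

lemma matching_dbs_tuple:
  "D \<in> matching_dbs n q \<Longrightarrow> (R, xs) \<in> q \<Longrightarrow> t \<in> D R \<Longrightarrow> length t = length xs \<and> set t \<subseteq> {1..n}"
  unfolding matching_dbs_def using matching_rel_tuple by fastforce

lemma matching_dbs_outside: "D \<in> matching_dbs n q \<Longrightarrow> R \<notin> cq_rels q \<Longrightarrow> D R = {}"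
  unfolding matching_dbs_def by auto

lemma answers_subset_PiE:
  assumes D: "D \<in> matching_dbs n q"
  shows "answers q D \<subseteq> cq_vars q \<rightarrow>\<^sub>E {1..n}"
proof
  fix \<alpha> assume \<alpha>: "\<alpha> \<in> answers q D"
  have "\<alpha> x \<in> {1..n}" if x: "x \<in> cq_vars q" for x
  proof -
    obtain R xs where R: "(R, xs) \<in> q" "x \<in> set xs" using x unfolding in_cq_vars by blast
    then have "map \<alpha> xs \<in> D R" using \<alpha> by (auto simp: answers_def)
    then have "set (map \<alpha> xs) \<subseteq> {1..n}" using matching_dbs_tuple[OF D R(1)] by blast
    then show ?thesis using R(2) by auto
  qed
  then show "\<alpha> \<in> cq_vars q \<rightarrow>\<^sub>E {1..n}" using \<alpha> by (auto simp: answers_def)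
qed

lemma finite_answers: "finite q \<Longrightarrow> D \<in> matching_dbs n q \<Longrightarrow> finite (answers q D)"
  by (rule finite_subset[OF answers_subset_PiE]) (auto intro: finite_PiE finite_cq_vars)

lemma finite_matching_dbs:
  assumes "finite q" shows "finite (matching_dbs n q)"
proof -
  define L where "L = Max (insert 0 (length ` snd ` q))"
  define X where "X = {t. set t \<subseteq> {1..n} \<and> length t \<le> L}"
  have "finite X" unfolding X_def by (rule finite_lists_length_le) simp
  have tuples: "t \<in> X" if D: "D \<in> matching_dbs n q" and t: "t \<in> D R" for D R t
  proof (cases "R \<in> cq_rels q")
    case True
    then obtain xs where xs: "(R, xs) \<in> q" by (auto simp: cq_rels_def)
    have "length xs \<le> L" unfolding L_def using assms xs
      by (intro Max_ge) (auto simp: image_iff intro!: bexI[of _ "(R, xs)"])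
    then show ?thesis using matching_dbs_tuple[OF D xs t] by (auto simp: X_def)
  qed (use t matching_dbs_outside[OF D] in simp)
  have "inj_on (\<lambda>D. restrict D (cq_rels q)) (matching_dbs n q)"
  proof (rule inj_onI, rule ext)
    fix D1 D2 R
    assume "D1 \<in> matching_dbs n q" "D2 \<in> matching_dbs n q"
      and "restrict D1 (cq_rels q) = restrict D2 (cq_rels q)"
    then show "D1 R = D2 R"
      by (cases "R \<in> cq_rels q") (metis restrict_apply', simp add: matching_dbs_outside)
  qed
  moreover have "(\<lambda>D. restrict D (cq_rels q)) ` matching_dbs n q \<subseteq> cq_rels q \<rightarrow>\<^sub>E Pow X"
    using tuples by auto
  then have "finite ((\<lambda>D. restrict D (cq_rels q)) ` matching_dbs n q)"
    by (rule finite_subset) (use assms \<open>finite X\<close> in \<open>auto simp: cq_rels_def intro!: finite_PiE\<close>)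
  ultimately show ?thesis using finite_imageD by blast
qed

lemma restrict_db_matching_dbs:
  assumes D: "D \<in> matching_dbs n q" and "q' \<subseteq> q"
  shows "restrict_db D q' \<in> matching_dbs n q'"
proof -
  have "R \<in> cq_rels q'" if "(R, xs) \<in> q'" for R xs
    using that by (force simp: cq_rels_def)
  then show ?thesis
    using D \<open>q' \<subseteq> q\<close> unfolding matching_dbs_def restrict_db_def by fastforce
qed

section \<open>Splitting a database along a subquery\<close>

lemma self_join_free_notin_cq_rels:
  assumes "self_join_free q" "q' \<subseteq> q" "(R, xs) \<in> q - q'"
  shows "R \<notin> cq_rels q'"
proof
  assume "R \<in> cq_rels q'"
  then obtain ys where "(R, ys) \<in> q'" by (auto simp: cq_rels_def)
  then have "(R, ys) = (R, xs)"
    using assms unfolding self_join_free_def by (metis DiffD1 fst_conv subsetD)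
  then show False using assms(3) \<open>(R, ys) \<in> q'\<close> by simp
qed

lemma self_join_free_the_vars:
  assumes "self_join_free q" "(R, xs) \<in> q"
  shows "(THE ys. (R, ys) \<in> q) = xs"
proof (rule the_equality)
  fix ys assume "(R, ys) \<in> q"
  then show "ys = xs" using assms unfolding self_join_free_def by (metis fst_conv prod.inject)
qed (rule assms(2))

lemma matching_dbs_merge:
  assumes sjf: "self_join_free q" and sub: "q' \<subseteq> q"
    and D1: "D1 \<in> matching_dbs n q'" and D2: "D2 \<in> matching_dbs n (q - q')"
  shows "(\<lambda>R. if R \<in> cq_rels q' then D1 R else D2 R) \<in> matching_dbs n q"
  unfolding matching_dbs_def
proof (intro CollectI conjI ballI allI impI)
  fix a assume a: "a \<in> q"
  obtain R xs where R: "a = (R, xs)" by fastforce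
  show "case a of (R, xs) \<Rightarrow> matching_rel n (length xs) (if R \<in> cq_rels q' then D1 R else D2 R)"
  proof (cases "a \<in> q'")
    case True
    then have "R \<in> cq_rels q'" using R by (force simp: cq_rels_def)
    then show ?thesis using D1 True R unfolding matching_dbs_def by auto
  next
    case False
    then have "R \<notin> cq_rels q'" using self_join_free_notin_cq_rels[OF sjf sub] a R by blast
    then show ?thesis using D2 False a R unfolding matching_dbs_def by auto
  qed
next
  fix R assume "R \<notin> cq_rels q"
  then have "R \<notin> cq_rels q'" "R \<notin> cq_rels (q - q')"
    using sub by (auto simp: cq_rels_def)
  then show "(if R \<in> cq_rels q' then D1 R else D2 R) = {}"
    using matching_dbs_outside[OF D2] by simp
qed

lemma bij_betw_restrict_db_pair:
  assumes sjf: "self_join_free q" and sub: "q' \<subseteq> q"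
  shows "bij_betw (\<lambda>D. (restrict_db D q', restrict_db D (q - q'))) (matching_dbs n q)
           (matching_dbs n q' \<times> matching_dbs n (q - q'))"
proof (rule bij_betw_byWitness[where f' = "\<lambda>(D1, D2) R. if R \<in> cq_rels q' then D1 R else D2 R"])
  have "cq_rels q = cq_rels q' \<union> cq_rels (q - q')"
    using sub by (auto simp: cq_rels_def)
  then show "\<forall>D\<in>matching_dbs n q. (\<lambda>(D1, D2) R. if R \<in> cq_rels q' then D1 R else D2 R)
               (restrict_db D q', restrict_db D (q - q')) = D"
    by (auto simp: restrict_db_def fun_eq_iff dest: matching_dbs_outside)
next
  have "R \<notin> cq_rels q'" if R: "R \<in> cq_rels (q - q')" for R
  proof -
    obtain xs where "(R, xs) \<in> q - q'" using R by (auto simp: cq_rels_def)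
    then show ?thesis using self_join_free_notin_cq_rels[OF sjf sub] by blast
  qed
  then show "\<forall>p\<in>matching_dbs n q' \<times> matching_dbs n (q - q').
      (\<lambda>D. (restrict_db D q', restrict_db D (q - q')))
        ((\<lambda>(D1, D2) R. if R \<in> cq_rels q' then D1 R else D2 R) p) = p"
    by (auto simp: restrict_db_def fun_eq_iff dest: matching_dbs_outside)
next
  show "(\<lambda>D. (restrict_db D q', restrict_db D (q - q'))) ` matching_dbs n q
          \<subseteq> matching_dbs n q' \<times> matching_dbs n (q - q')"
    using restrict_db_matching_dbs sub by blast
  show "(\<lambda>(D1, D2) R. if R \<in> cq_rels q' then D1 R else D2 R) `
          (matching_dbs n q' \<times> matching_dbs n (q - q')) \<subseteq> matching_dbs n q"
    by (auto intro!: matching_dbs_merge[OF sjf sub])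
qed

section \<open>Extensions of a partial answer\<close>

definition extensions :: "('r, 'v) cq \<Rightarrow> ('r, 'v) cq \<Rightarrow> 'r db \<Rightarrow> ('v \<Rightarrow> nat) \<Rightarrow> ('v \<Rightarrow> nat) set" where
  "extensions q q' D \<alpha> = {\<gamma> \<in> cq_vars q \<rightarrow>\<^sub>E UNIV. restrict \<gamma> (cq_vars q') = \<alpha> \<and>
                                               (\<forall>(R, xs)\<in>q - q'. map \<gamma> xs \<in> D R)}"

lemma map_restrict: "set xs \<subseteq> V \<Longrightarrow> map (restrict \<gamma> V) xs = map \<gamma> xs"
  by (induction xs) auto

lemma semijoin_answers_eq_UN_extensions:
  assumes sub: "q' \<subseteq> q" and A: "A \<subseteq> answers q' (restrict_db D q')"
  shows "semijoin (answers q D) (cq_vars q') A = (\<Union>\<alpha>\<in>A. extensions q q' (restrict_db D (q - q')) \<alpha>)"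
proof -
  have atoms_q': "map \<gamma> xs \<in> D R" if "(R, xs) \<in> q'" "restrict \<gamma> (cq_vars q') \<in> A" for R xs \<gamma>
  proof -
    have "R \<in> cq_rels q'" "set xs \<subseteq> cq_vars q'"
      using that(1) by (force simp: cq_rels_def cq_vars_def)+
    then show ?thesis
      using that A by (force simp: answers_def restrict_db_def map_restrict)
  qed
  have atoms_rest: "restrict_db D (q - q') R = D R" if "(R, xs) \<in> q - q'" for R xs
    using that by (force simp: restrict_db_def cq_rels_def)
  have "(\<forall>(R, xs)\<in>q. map \<gamma> xs \<in> D R) \<longleftrightarrow> (\<forall>(R, xs)\<in>q - q'. map \<gamma> xs \<in> restrict_db D (q - q') R)"
    if "restrict \<gamma> (cq_vars q') \<in> A" for \<gamma>
    using atoms_q'[OF _ that] atoms_rest sub by fastforce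
  then show ?thesis by (auto simp: semijoin_def extensions_def answers_def)
qed

lemma finite_extensions:
  assumes "finite q" and D: "D \<in> matching_dbs n (q - q')"
  shows "finite (extensions q q' D \<alpha>)"
proof -
  let ?S = "\<lambda>x. if x \<in> cq_vars q' then {\<alpha> x} else {1..n}"
  have "\<gamma> x \<in> ?S x" if \<gamma>: "\<gamma> \<in> extensions q q' D \<alpha>" and x: "x \<in> cq_vars q" for \<gamma> x
  proof (cases "x \<in> cq_vars q'")
    case True then show ?thesis using \<gamma> by (auto simp: extensions_def)
  next
    case False
    obtain R xs where R: "(R, xs) \<in> q" "x \<in> set xs" using x unfolding in_cq_vars by blast
    then have "(R, xs) \<in> q - q'" using False by (force simp: cq_vars_def)
    then have "set (map \<gamma> xs) \<subseteq> {1..n}"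
      using \<gamma> matching_dbs_tuple[OF D] by (fastforce simp: extensions_def)
    then show ?thesis using False R(2) by auto
  qed
  moreover have "\<gamma> x = undefined" if "\<gamma> \<in> extensions q q' D \<alpha>" "x \<notin> cq_vars q" for \<gamma> x
    using that by (auto simp: extensions_def extensional_def)
  ultimately have "extensions q q' D \<alpha> \<subseteq> PiE (cq_vars q) ?S"
    by (blast intro: PiE_I)
  then show ?thesis by (rule finite_subset) (intro finite_PiE finite_cq_vars \<open>finite q\<close>, simp)
qed

lemma card_semijoin_answers:
  assumes fin: "finite q" and sub: "q' \<subseteq> q" and D: "D \<in> matching_dbs n q"
    and A: "A \<subseteq> answers q' (restrict_db D q')"
  shows "card (semijoin (answers q D) (cq_vars q') A)
       = (\<Sum>\<alpha>\<in>A. card (extensions q q' (restrict_db D (q - q')) \<alpha>))"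
  unfolding semijoin_answers_eq_UN_extensions[OF sub A]
proof (rule card_UN_disjoint)
  show "finite A"
    using A finite_answers restrict_db_matching_dbs[OF D sub] fin sub
    by (meson finite_subset)
  show "\<forall>\<alpha>\<in>A. finite (extensions q q' (restrict_db D (q - q')) \<alpha>)"
    using finite_extensions[OF fin restrict_db_matching_dbs[OF D]] by blast
  show "\<forall>\<alpha>\<in>A. \<forall>\<beta>\<in>A. \<alpha> \<noteq> \<beta> \<longrightarrow>
      extensions q q' (restrict_db D (q - q')) \<alpha> \<inter> extensions q q' (restrict_db D (q - q')) \<beta> = {}"
    by (auto simp: extensions_def)
qed

lemma semijoin_answers_restrict_db:
  assumes "q' \<subseteq> q"
  shows "semijoin (answers q D) (cq_vars q') (answers q' (restrict_db D q')) = answers q D"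
proof -
  have "map (restrict \<gamma> (cq_vars q')) xs \<in> restrict_db D q' R"
    if "\<gamma> \<in> answers q D" "(R, xs) \<in> q'" for \<gamma> R xs
  proof -
    have "set xs \<subseteq> cq_vars q'" "R \<in> cq_rels q'"
      using that(2) by (force simp: cq_vars_def cq_rels_def)+
    then show ?thesis
      using that assms by (auto simp: map_restrict answers_def restrict_db_def)
  qed
  then show ?thesis by (auto simp: semijoin_def answers_def)
qed

section \<open>Transposing values\<close>

text \<open>Column \<open>j\<close> of relation \<open>R\<close> holds the variable \<open>(THE xs. (R, xs) \<in> q) ! j\<close>;
  \<open>rename_db q \<sigma>\<close> applies \<open>\<sigma> x\<close> to every column holding \<open>x\<close>.\<close>

definition rename_db :: "('r, 'v) cq \<Rightarrow> ('v \<Rightarrow> nat \<Rightarrow> nat) \<Rightarrow> 'r db \<Rightarrow> 'r db" where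
  "rename_db q \<sigma> D = (\<lambda>R. map_cols (\<lambda>j. \<sigma> ((THE xs. (R, xs) \<in> q) ! j)) ` D R)"

lemma rename_db_involutive:
  assumes "\<And>x v. \<sigma> x (\<sigma> x v) = v"
  shows "rename_db q \<sigma> (rename_db q \<sigma> D) = D"
  by (simp add: rename_db_def image_image map_cols_involutive assms)

lemma rename_db_matching_dbs:
  assumes sjf: "self_join_free q" and sub: "Q \<subseteq> q" and D: "D \<in> matching_dbs n Q"
    and inv: "\<And>x v. \<sigma> x (\<sigma> x v) = v" and range: "\<And>x v. v \<in> {1..n} \<Longrightarrow> \<sigma> x v \<in> {1..n}"
  shows "rename_db q \<sigma> D \<in> matching_dbs n Q"
  unfolding matching_dbs_def
proof (intro CollectI conjI ballI allI impI)
  fix a assume a: "a \<in> Q"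
  obtain R xs where R: "a = (R, xs)" by fastforce
  have "(THE ys. (R, ys) \<in> q) = xs" using self_join_free_the_vars[OF sjf] a R sub by blast
  moreover have "matching_rel n (length xs) (D R)" using D a R unfolding matching_dbs_def by auto
  ultimately show "case a of (R, xs) \<Rightarrow> matching_rel n (length xs) (rename_db q \<sigma> D R)"
    using R inv range by (auto simp: rename_db_def intro!: matching_rel_map_cols)
next
  fix R assume "R \<notin> cq_rels Q"
  then show "rename_db q \<sigma> D R = {}" using matching_dbs_outside[OF D] by (simp add: rename_db_def)
qed

definition swap_vals :: "'v set \<Rightarrow> ('v \<Rightarrow> nat) \<Rightarrow> ('v \<Rightarrow> nat) \<Rightarrow> 'v \<Rightarrow> nat \<Rightarrow> nat" where
  "swap_vals V \<alpha> \<beta> x = (if x \<in> V then Transposition.transpose (\<alpha> x) (\<beta> x) else id)"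

lemma swap_vals_involutive [simp]: "swap_vals V \<alpha> \<beta> x (swap_vals V \<alpha> \<beta> x v) = v"
  by (simp add: swap_vals_def)

lemma swap_vals_commute: "swap_vals V \<beta> \<alpha> = swap_vals V \<alpha> \<beta>"
  by (simp add: swap_vals_def fun_eq_iff transpose_commute)

lemma swap_vals_range:
  "\<alpha> \<in> V \<rightarrow>\<^sub>E S \<Longrightarrow> \<beta> \<in> V \<rightarrow>\<^sub>E S \<Longrightarrow> v \<in> S \<Longrightarrow> swap_vals V \<alpha> \<beta> x v \<in> S"
  by (auto simp: swap_vals_def Transposition.transpose_def PiE_iff)

lemma swap_vals_extensions:
  assumes sjf: "self_join_free q" and sub: "q' \<subseteq> q" and \<beta>: "\<beta> \<in> cq_vars q' \<rightarrow>\<^sub>E UNIV"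
    and \<gamma>: "\<gamma> \<in> extensions q q' D \<alpha>"
  defines "\<sigma> \<equiv> swap_vals (cq_vars q') \<alpha> \<beta>"
  shows "(\<lambda>x. \<sigma> x (\<gamma> x)) \<in> extensions q q' (rename_db q \<sigma> D) \<beta>"
proof -
  have "\<gamma> x = \<alpha> x" if "x \<in> cq_vars q'" for x
    using \<gamma> that unfolding extensions_def by (metis (mono_tags, lifting) mem_Collect_eq restrict_apply')
  then have "restrict (\<lambda>x. \<sigma> x (\<gamma> x)) (cq_vars q') = \<beta>"
    using \<beta> by (auto simp: extensions_def \<sigma>_def swap_vals_def fun_eq_iff PiE_iff extensional_def)
  moreover have "(\<lambda>x. \<sigma> x (\<gamma> x)) \<in> cq_vars q \<rightarrow>\<^sub>E UNIV"
    using \<gamma> cq_vars_mono[OF sub] by (auto simp: extensions_def \<sigma>_def swap_vals_def PiE_iff extensional_def)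
  moreover have "map (\<lambda>x. \<sigma> x (\<gamma> x)) xs \<in> rename_db q \<sigma> D R" if R: "(R, xs) \<in> q - q'" for R xs
  proof -
    have "map \<gamma> xs \<in> D R" using \<gamma> R by (force simp: extensions_def)
    then show ?thesis
      using self_join_free_the_vars[OF sjf] R by (auto simp: rename_db_def simp flip: map_cols_map)
  qed
  ultimately show ?thesis by (auto simp: extensions_def)
qed

lemma card_extensions_rename_db:
  assumes sjf: "self_join_free q" and sub: "q' \<subseteq> q"
    and \<alpha>: "\<alpha> \<in> cq_vars q' \<rightarrow>\<^sub>E UNIV" and \<beta>: "\<beta> \<in> cq_vars q' \<rightarrow>\<^sub>E UNIV"
  defines "\<sigma> \<equiv> swap_vals (cq_vars q') \<alpha> \<beta>"
  shows "card (extensions q q' D \<alpha>) = card (extensions q q' (rename_db q \<sigma> D) \<beta>)"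
proof (rule bij_betw_same_card, rule bij_betw_byWitness[where f' = "\<lambda>\<gamma> x. \<sigma> x (\<gamma> x)"])
  show "(\<lambda>\<gamma> x. \<sigma> x (\<gamma> x)) ` extensions q q' D \<alpha> \<subseteq> extensions q q' (rename_db q \<sigma> D) \<beta>"
    using swap_vals_extensions[OF sjf sub \<beta>] unfolding \<sigma>_def by blast
  have "\<sigma> = swap_vals (cq_vars q') \<beta> \<alpha>"
    by (simp add: \<sigma>_def swap_vals_commute)
  then show "(\<lambda>\<gamma> x. \<sigma> x (\<gamma> x)) ` extensions q q' (rename_db q \<sigma> D) \<beta> \<subseteq> extensions q q' D \<alpha>"
    using swap_vals_extensions[OF sjf sub \<alpha>, of _ "rename_db q \<sigma> D" \<beta>]
    by (auto simp: rename_db_involutive)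
qed (simp_all add: \<sigma>_def)

lemma sum_card_extensions_eq:
  assumes sjf: "self_join_free q" and sub: "q' \<subseteq> q"
    and \<alpha>: "\<alpha> \<in> cq_vars q' \<rightarrow>\<^sub>E {1..n}" and \<beta>: "\<beta> \<in> cq_vars q' \<rightarrow>\<^sub>E {1..n}"
  shows "(\<Sum>D\<in>matching_dbs n (q - q'). card (extensions q q' D \<alpha>))
       = (\<Sum>D\<in>matching_dbs n (q - q'). card (extensions q q' D \<beta>))"
proof -
  let ?\<sigma> = "swap_vals (cq_vars q') \<alpha> \<beta>" and ?M = "matching_dbs n (q - q')"
  have "rename_db q ?\<sigma> D \<in> ?M" if "D \<in> ?M" for D
  proof (rule rename_db_matching_dbs[OF sjf _ that])
    show "?\<sigma> x v \<in> {1..n}" if "v \<in> {1..n}" for x v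
      using swap_vals_range[OF \<alpha> \<beta> that] .
  qed (rule Diff_subset, rule swap_vals_involutive)
  then have "bij_betw (rename_db q ?\<sigma>) ?M ?M"
    by (intro bij_betw_byWitness[where f' = "rename_db q ?\<sigma>"] ballI image_subsetI)
       (simp_all add: rename_db_involutive)
  then have "(\<Sum>D\<in>?M. card (extensions q q' (rename_db q ?\<sigma> D) \<beta>)) = (\<Sum>D\<in>?M. card (extensions q q' D \<beta>))"
    by (rule sum.reindex_bij_betw)
  moreover have "\<alpha> \<in> cq_vars q' \<rightarrow>\<^sub>E UNIV" "\<beta> \<in> cq_vars q' \<rightarrow>\<^sub>E UNIV"
    using \<alpha> \<beta> by (auto simp: PiE_iff)
  then have "card (extensions q q' D \<alpha>) = card (extensions q q' (rename_db q ?\<sigma> D) \<beta>)" for D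
    by (rule card_extensions_rename_db[OF sjf sub])
  ultimately show ?thesis by simp
qed

section \<open>Counting\<close>

text \<open>If \<open>cq_vars q' \<rightarrow>\<^sub>E {1..n}\<close> is empty, \<open>SOME\<close> picks an arbitrary assignment; then \<open>q'\<close>
  has no answers and the value of the count is irrelevant.\<close>

definition extension_count :: "nat \<Rightarrow> ('r, 'v) cq \<Rightarrow> ('r, 'v) cq \<Rightarrow> nat" where
  "extension_count n q q' = (\<Sum>D\<in>matching_dbs n (q - q').
     card (extensions q q' D (SOME \<alpha>. \<alpha> \<in> cq_vars q' \<rightarrow>\<^sub>E {1..n})))"

lemma sum_card_extensions_eq_extension_count:
  assumes "self_join_free q" "q' \<subseteq> q" "\<alpha> \<in> cq_vars q' \<rightarrow>\<^sub>E {1..n}"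
  shows "(\<Sum>D\<in>matching_dbs n (q - q'). card (extensions q q' D \<alpha>)) = extension_count n q q'"
proof -
  have "(SOME \<beta>. \<beta> \<in> cq_vars q' \<rightarrow>\<^sub>E {1..n}) \<in> cq_vars q' \<rightarrow>\<^sub>E {1..n}"
    using assms(3) by (rule someI[where P = "\<lambda>\<beta>. \<beta> \<in> cq_vars q' \<rightarrow>\<^sub>E {1..n}"])
  then show ?thesis unfolding extension_count_def by (rule sum_card_extensions_eq[OF assms])
qed

lemma sum_card_semijoin_answers:
  fixes q q' :: "('r, 'v) cq"
  assumes fin: "finite q" and sjf: "self_join_free q" and sub: "q' \<subseteq> q"
    and B: "\<forall>D\<in>matching_dbs n q'. B D \<subseteq> answers q' D"
  shows "card (matching_dbs n (q - q')) *
           (\<Sum>D\<in>matching_dbs n q. card (semijoin (answers q D) (cq_vars q') (B (restrict_db D q'))))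
       = extension_count n q q' * (\<Sum>D\<in>matching_dbs n q. card (B (restrict_db D q')))"
proof -
  let ?M1 = "matching_dbs n q'" and ?M2 = "matching_dbs n (q - q')"
  have split: "(\<Sum>D\<in>matching_dbs n q. f (restrict_db D q') (restrict_db D (q - q')))
             = (\<Sum>D1\<in>?M1. \<Sum>D2\<in>?M2. f D1 D2)" for f :: "'r db \<Rightarrow> 'r db \<Rightarrow> nat"
    using sum.reindex_bij_betw[OF bij_betw_restrict_db_pair[OF sjf sub], of "case_prod f"]
    by (simp add: sum.cartesian_product)
  have count: "(\<Sum>D2\<in>?M2. card (extensions q q' D2 \<alpha>)) = extension_count n q q'"
    if "D1 \<in> ?M1" "\<alpha> \<in> B D1" for D1 \<alpha>
    using that B answers_subset_PiE[OF that(1)]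
    by (intro sum_card_extensions_eq_extension_count[OF sjf sub]) blast
  have "(\<Sum>D\<in>matching_dbs n q. card (semijoin (answers q D) (cq_vars q') (B (restrict_db D q'))))
      = (\<Sum>D\<in>matching_dbs n q. \<Sum>\<alpha>\<in>B (restrict_db D q'). card (extensions q q' (restrict_db D (q - q')) \<alpha>))"
    using B restrict_db_matching_dbs[OF _ sub] by (intro sum.cong refl card_semijoin_answers[OF fin sub]) blast+
  also have "\<dots> = (\<Sum>D1\<in>?M1. \<Sum>D2\<in>?M2. \<Sum>\<alpha>\<in>B D1. card (extensions q q' D2 \<alpha>))"
    by (rule split)
  also have "\<dots> = (\<Sum>D1\<in>?M1. \<Sum>\<alpha>\<in>B D1. \<Sum>D2\<in>?M2. card (extensions q q' D2 \<alpha>))"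
    by (rule sum.cong[OF refl], rule sum.swap)
  also have "\<dots> = (\<Sum>D1\<in>?M1. card (B D1) * extension_count n q q')"
    by (intro sum.cong refl) (simp add: count)
  finally have "(\<Sum>D\<in>matching_dbs n q. card (semijoin (answers q D) (cq_vars q') (B (restrict_db D q'))))
      = (\<Sum>D1\<in>?M1. card (B D1) * extension_count n q q')" .
  moreover have "(\<Sum>D\<in>matching_dbs n q. card (B (restrict_db D q'))) = (\<Sum>D1\<in>?M1. card ?M2 * card (B D1))"
    using split[of "\<lambda>D1 D2. card (B D1)"] by simp
  ultimately show ?thesis by (simp add: sum_distrib_left mult_ac)
qed

lemma nonempty_matching_dbs_diff:
  "matching_dbs n q \<noteq> {} \<Longrightarrow> matching_dbs n (q - q') \<noteq> {}"
  using restrict_db_matching_dbs[of _ n q "q - q'"] by blast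

lemma le_mult_of_proportional:
  fixes a b x y c K :: nat and \<gamma> :: real
  assumes "0 < c" "c * a = K * x" "c * b = K * y" "real x \<le> \<gamma> * real y"
  shows "real a \<le> \<gamma> * real b"
proof -
  have "real c * real a = real K * real x"
    using assms(2) by (simp only: of_nat_mult[symmetric])
  also have "\<dots> \<le> real K * (\<gamma> * real y)"
    using assms(4) by (simp add: mult_left_mono)
  also have "\<dots> = \<gamma> * (real c * real b)"
    using assms(3) by (simp add: mult_ac flip: of_nat_mult)
  finally show ?thesis using assms(1) by (simp add: mult.left_commute)
qed

lemma expectation_pmf_of_set_card:
  assumes "finite S" "S \<noteq> {}"
  shows "measure_pmf.expectation (pmf_of_set S) (\<lambda>x. real (f x)) = real (\<Sum>x\<in>S. f x) / real (card S)"
  using assms by (simp add: integral_pmf_of_set)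

theorem lemma11:
  fixes q q' :: "('r, 'v) cq" and n :: nat and \<gamma> :: real
    and B :: "'r db \<Rightarrow> ('v \<Rightarrow> nat) set"
  assumes "finite q" and "self_join_free q" and "q' \<subseteq> q"
    and "matching_dbs n q \<noteq> {}"
    and "\<forall>D'\<in>matching_dbs n q'. B D' \<subseteq> answers q' D'"
    and "measure_pmf.expectation (pmf_of_set (matching_dbs n q))
           (\<lambda>I. real (card (B (restrict_db I q'))))
         \<le> \<gamma> * measure_pmf.expectation (pmf_of_set (matching_dbs n q))
           (\<lambda>I. real (card (answers q' (restrict_db I q'))))"
  shows "measure_pmf.expectation (pmf_of_set (matching_dbs n q))
           (\<lambda>I. real (card (semijoin (answers q I) (cq_vars q') (B (restrict_db I q')))))
         \<le> \<gamma> * measure_pmf.expectation (pmf_of_set (matching_dbs n q))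
           (\<lambda>I. real (card (answers q I)))"
proof -
  let ?M = "matching_dbs n q"
  have "finite ?M" using finite_matching_dbs[OF assms(1)] .
  then have expectation:
    "measure_pmf.expectation (pmf_of_set ?M) (\<lambda>I. real (f I)) = real (\<Sum>I\<in>?M. f I) / card ?M"
    for f :: "'r db \<Rightarrow> nat"
    using assms(4) by (rule expectation_pmf_of_set_card)
  have "card ?M > 0"
    using \<open>finite ?M\<close> assms(4) by (simp add: card_gt_0_iff)
  have bound: "real (\<Sum>I\<in>?M. card (B (restrict_db I q')))
      \<le> \<gamma> * real (\<Sum>I\<in>?M. card (answers q' (restrict_db I q')))"
    using assms(6) \<open>card ?M > 0\<close> by (simp add: expectation divide_le_eq)
  have "real (\<Sum>I\<in>?M. card (semijoin (answers q I) (cq_vars q') (B (restrict_db I q'))))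
       \<le> \<gamma> * real (\<Sum>I\<in>?M. card (answers q I))"
  proof (rule le_mult_of_proportional[OF _ sum_card_semijoin_answers[OF assms(1-3,5)] _ bound])
    show "card (matching_dbs n (q - q')) > 0"
      using finite_matching_dbs[of "q - q'" n] assms(1) nonempty_matching_dbs_diff[OF assms(4)]
      by (simp add: card_gt_0_iff)
    show "card (matching_dbs n (q - q')) * (\<Sum>I\<in>?M. card (answers q I))
        = extension_count n q q' * (\<Sum>I\<in>?M. card (answers q' (restrict_db I q')))"
      using sum_card_semijoin_answers[OF assms(1-3), where B = "answers q'"]
      by (simp add: semijoin_answers_restrict_db[OF assms(3)])
  qed
  then show ?thesis by (simp add: expectation divide_right_mono)
qed

end
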